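(* For all integers $q\ge2$ and $n\ge\delta\ge2$ there exists a subset $\mathcal A\subseteq J_q(n)$ with $$|\mathcal A|\ge\frac{\binom{n+q-1}{n}}{(2q+2)^{\delta-2}(2q+1)}$$ such that $d_L(\mathbf u,\mathbf v)\ge 2\delta$ for all distinct $\mathbf u,\mathbf v\in\mathcal A$.
   Context: $J_q(n)=\{(a_1,\dots,a_q)\in\mathbb Z_{\ge0}^q:\ \sum_{i=1}^q a_i=n\}$. The $L^1$-distance is $d_L(\mathbf u,\mathbf v)=\sum_{i=1}^q|u_i-v_i|$. *)

theory Defs
  imports Complex_Main "HOL-Library.FuncSet"
begin

text \<open>Vectors (a_1,...,a_q) are represented as extensional functions on the
index set {..<q} (0-based indexing), with nonnegative integer (nat) entries.\<close>

definition J :: "nat \<Rightarrow> nat \<Rightarrow> (nat \<Rightarrow> nat) set" where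
  "J q n = {a \<in> {..<q} \<rightarrow>\<^sub>E (UNIV :: nat set). (\<Sum>i<q. a i) = n}"

definition dL :: "nat \<Rightarrow> (nat \<Rightarrow> nat) \<Rightarrow> (nat \<Rightarrow> nat) \<Rightarrow> int" where
  "dL q u v = (\<Sum>i<q. \<bar>int (u i) - int (v i)\<bar>)"

end

theory Submission
  imports Defs "HOL-Computational_Algebra.Primes" "HOL-Computational_Algebra.Polynomial"
    "HOL-Analysis.Harmonic_Numbers"
begin

text \<open>Read \<open>u \<in> J q n\<close> as the multiset with \<open>u i\<close> copies of the letter \<open>i + 1\<close> and let
  \<open>G\<^sub>u = \<Prod>(1 + a X)\<close> over its letters. Fix a prime \<open>q < p \<le> 2q\<close> (Bertrand's postulate) and
  \<open>h = \<delta> - 1\<close>, and sort the vectors by the residues modulo \<open>p\<close> of the coefficients of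
  \<open>X, \<dots>, X ^ h\<close> in \<open>G\<^sub>u\<close>; there are at most \<open>p ^ h \<le> (2q) ^ (\<delta> - 1)\<close> classes, so the largest one is big
  enough. If \<open>u \<noteq> v\<close> lie in one class and \<open>d\<^sub>L(u, v) = 2k \<le> 2h\<close>, cancel their common part:
  \<open>u = w + x\<close>, \<open>v = w + y\<close> with \<open>x, y\<close> of disjoint support and weight \<open>k\<close>. Since \<open>G\<^sub>w\<close> has constant
  term \<open>1\<close>, \<open>G\<^sub>x \<equiv> G\<^sub>y\<close> modulo \<open>p\<close> up to degree \<open>h\<close>, hence as polynomials. Evaluating at the root
  of a factor \<open>1 + a X\<close> of \<open>G\<^sub>x\<close> modulo \<open>p\<close> kills \<open>G\<^sub>x\<close> but not \<open>G\<^sub>y\<close>, because distinct letters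
  are distinct modulo \<open>p > q\<close>.\<close>

section \<open>Bertrand's postulate\<close>

lemma prime_nat_by_trial_division:
  fixes p m :: nat
  assumes "p \<ge> 2" and "p < m * m" and "\<forall>d \<in> set [2..<m]. \<not> d dvd p"
  shows "prime p"
proof (rule ccontr)
  assume "\<not> prime p"
  then obtain d where d: "d \<in> {2..<p}" "d dvd p"
    using prime_nat_iff' assms(1) by auto
  then obtain e where e: "p = d * e" by blast
  with d assms(1) have "e \<ge> 2"
    by (cases e) (auto simp: le_Suc_eq)
  define f where "f = min d e"
  have "f dvd p" "f \<ge> 2" using e d \<open>e \<ge> 2\<close> unfolding f_def min_def by auto
  have "f * f \<le> p" unfolding f_def e by (intro mult_mono) auto
  have "f < m"
  proof (rule ccontr)
    assume "\<not> f < m"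
    then have "m * m \<le> f * f" by (intro mult_mono) auto
    with \<open>f * f \<le> p\<close> assms(2) show False by simp
  qed
  with assms(3) \<open>f dvd p\<close> \<open>f \<ge> 2\<close> show False by auto
qed

definition primorial :: "nat \<Rightarrow> nat" where
  "primorial n = \<Prod>{p. prime p \<and> p \<le> n}"

lemma finite_primes_le: "finite {p::nat. prime p \<and> p \<le> n}"
  by (rule finite_subset[of _ "{..n}"]) auto

lemma binomial_Suc_double_le_four_power: "(2*m+1) choose m \<le> 4^m"
proof -
  have "2 * ((2*m+1) choose m) = (\<Sum>k\<in>{m, m+1}. (2*m+1) choose k)"
    using binomial_symmetric[of "m+1" "2*m+1"] by simp
  also have "\<dots> \<le> (\<Sum>k\<le>2*m+1. (2*m+1) choose k)"
    by (intro sum_mono2) auto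
  also have "\<dots> = 2^(2*m+1)" by (rule choose_row_sum)
  also have "\<dots> = 2 * 4^m" by (simp add: power_mult)
  finally show ?thesis by simp
qed

lemma prod_primes_dvd:
  fixes x :: nat
  assumes "finite S" and "\<And>p. p \<in> S \<Longrightarrow> prime p \<and> p dvd x"
  shows "\<Prod>S dvd x"
  using assms
proof (induction S rule: finite_induct)
  case (insert p S)
  have "\<not> p dvd \<Prod>S"
  proof
    assume "p dvd \<Prod>S"
    then obtain s where "s \<in> S" "p dvd s"
      using insert by (auto simp: prime_dvd_prod_iff)
    moreover have "prime p" "prime s" using insert.prems \<open>s \<in> S\<close> by auto
    ultimately have "p = s" using primes_dvd_imp_eq by blast
    with \<open>s \<in> S\<close> \<open>p \<notin> S\<close> show False by simp
  qed
  then have "coprime p (\<Prod>S)" using insert by (auto intro: prime_imp_coprime)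
  with insert show ?case by (simp add: divides_mult)
qed simp

text \<open>The primes in \<open>(m + 1, 2m + 1]\<close> all divide \<open>(2m + 1 choose m) \<le> 4\<^sup>m\<close>.\<close>

lemma primorial_le_four_power: "primorial n \<le> 4 ^ n"
proof (induction n rule: less_induct)
  case (less n)
  have "n \<le> 2 \<or> (n > 2 \<and> even n) \<or> (\<exists>m. n = 2*m+1 \<and> m \<ge> 1)" by presburger
  then consider "n \<le> 2" | "n > 2" "even n" | m where "n = 2*m+1" "m \<ge> 1" by blast
  then show ?case
  proof cases
    case 1
    then have "{p::nat. prime p \<and> p \<le> n} = (if n = 2 then {2} else {})"
      by (auto dest: prime_ge_2_nat)
    then show ?thesis
      unfolding primorial_def using 1 by (auto simp: power_increasing)
  next
    case 2
    then have "\<not> prime n" using prime_odd_nat by blast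
    then have "{p. prime p \<and> p \<le> n} = {p. prime p \<and> p \<le> n - 1}"
      by (auto simp: order.order_iff_strict)
    then have "primorial n = primorial (n - 1)"
      unfolding primorial_def by simp
    also have "\<dots> \<le> 4 ^ (n - 1)" using less 2 by auto
    also have "\<dots> \<le> 4 ^ n" by (intro power_increasing) auto
    finally show ?thesis .
  next
    case 3
    define A where "A = {p::nat. prime p \<and> p \<le> m+1}"
    define B where "B = {p::nat. prime p \<and> m+1 < p \<and> p \<le> 2*m+1}"
    have AB: "{p. prime p \<and> p \<le> n} = A \<union> B" "A \<inter> B = {}"
      unfolding A_def B_def using 3 by auto
    have "finite A" "finite B"
      unfolding A_def B_def by (auto intro: finite_subset[OF _ finite_atMost])
    then have "primorial n = \<Prod>A * \<Prod>B"
      unfolding primorial_def AB by (rule prod.union_disjoint) (use AB in auto)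
    moreover have "\<Prod>A \<le> 4^(m+1)"
      using less[of "m+1"] 3 unfolding A_def primorial_def by simp
    moreover have "\<Prod>B \<le> 4^m"
    proof -
      have "\<Prod>B dvd (2*m+1) choose m"
      proof (rule prod_primes_dvd[OF \<open>finite B\<close>])
        fix p assume p: "p \<in> B"
        have "fact m * fact (m+1) * ((2*m+1) choose m) = (fact (2*m+1) :: nat)"
          using binomial_fact_lemma[of m "2*m+1"] by simp
        moreover have "p dvd fact (2*m+1)" "\<not> p dvd fact m" "\<not> p dvd fact (m+1)"
          using p unfolding B_def by (subst prime_dvd_fact_iff; auto)+
        ultimately show "prime p \<and> p dvd (2*m+1) choose m"
          using p unfolding B_def by (metis mem_Collect_eq prime_dvd_mult_iff)
      qed
      then have "\<Prod>B \<le> (2*m+1) choose m" by (rule dvd_imp_le) simp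
      then show ?thesis using binomial_Suc_double_le_four_power[of m] by linarith
    qed
    ultimately have "primorial n \<le> 4^(m+1) * 4^m" using mult_le_mono by presburger
    also have "\<dots> = 4^n" using 3 by (simp add: power_add[symmetric])
    finally show ?thesis .
  qed
qed

lemma less_power_self: "(p::nat) \<ge> 2 \<Longrightarrow> n < p ^ n"
  using less_exp[of n] power_mono[of 2 p n] by linarith

lemma multiplicity_eq_card_prime_power_divisors:
  fixes p m :: nat
  assumes "prime p" and "m > 0"
  shows "multiplicity p m = card {i \<in> {1..m}. p ^ i dvd m}"
proof -
  have "p ^ multiplicity p m \<le> m"
    using assms(2) by (intro dvd_imp_le multiplicity_dvd)
  then have "multiplicity p m \<le> m"
    using less_power_self[of p "multiplicity p m"] prime_ge_2_nat[OF assms(1)] by linarith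
  moreover have iff: "p ^ i dvd m \<longleftrightarrow> i \<le> multiplicity p m" for i
    using power_dvd_iff_le_multiplicity[of m p i] assms prime_gt_1_nat[OF assms(1)] by auto
  ultimately have "{i \<in> {1..m}. p ^ i dvd m} = {1..multiplicity p m}"
    unfolding iff by auto
  then show ?thesis by simp
qed

lemma multiplicity_fact:
  fixes p :: nat
  assumes "prime p"
  shows "multiplicity p (fact n :: nat) = (\<Sum>i=1..n. n div p^i)"
proof (induction n)
  case (Suc n)
  have p: "p \<ge> 2" using prime_ge_2_nat[OF assms] .
  have "multiplicity p (fact (Suc n) :: nat) = multiplicity p (Suc n) + multiplicity p (fact n :: nat)"
    using assms by (simp only: fact_Suc of_nat_id) (intro prime_elem_multiplicity_mult_distrib; simp)
  also have "multiplicity p (Suc n) = card {i \<in> {1..Suc n}. p^i dvd Suc n}"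
    using assms by (simp add: multiplicity_eq_card_prime_power_divisors)
  also have "\<dots> = (\<Sum>i=1..Suc n. if p^i dvd Suc n then 1 else 0)"
    by (simp only: card_eq_sum sum.inter_filter finite_atLeastAtMost)
  also have "multiplicity p (fact n :: nat) = (\<Sum>i=1..Suc n. n div p^i)"
    using Suc.IH less_power_self[OF p, of "Suc n"] by simp
  also have "(\<Sum>i=1..Suc n. if p^i dvd Suc n then 1 else 0) + (\<Sum>i=1..Suc n. n div p^i) =
             (\<Sum>i=1..Suc n. (if p^i dvd Suc n then 1 else 0) + n div p^i)"
    by (simp only: sum.distrib)
  also have "\<dots> = (\<Sum>i=1..Suc n. Suc n div p^i)"
    using p by (intro sum.cong refl) (simp add: div_Suc dvd_eq_mod_eq_0)
  finally show ?case .
qed simp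

lemma div_double_bounds:
  fixes n y :: nat
  assumes "y > 0"
  shows "2 * (n div y) \<le> (2*n) div y" and "(2*n) div y \<le> 2 * (n div y) + 1"
proof -
  define a r where "a = n div y" and "r = n mod y"
  have "n = y * a + r" and "r < y"
    unfolding a_def r_def using assms by auto
  then have "2*n = y * (2*a) + 2*r" by simp
  then have "(2*n) div y = 2*a + (2*r) div y" using assms by simp
  moreover have "(2*r) div y < 2"
    using \<open>r < y\<close> by (intro less_mult_imp_div_less) simp
  ultimately show "2 * (n div y) \<le> (2*n) div y" "(2*n) div y \<le> 2 * (n div y) + 1"
    unfolding a_def by linarith+
qed

text \<open>The carry in position \<open>i\<close> when adding \<open>n + n\<close> in base \<open>p\<close>; it is \<open>0\<close> or \<open>1\<close>.\<close>

definition carry :: "nat \<Rightarrow> nat \<Rightarrow> nat \<Rightarrow> nat" where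
  "carry p n i = (2*n) div p^i - 2 * (n div p^i)"

lemma carry_le_1: "p > 0 \<Longrightarrow> carry p n i \<le> 1"
  unfolding carry_def using div_double_bounds(2)[of "p^i" n] by simp

lemma carry_eq_0: "2*n < p^i \<Longrightarrow> carry p n i = 0"
  unfolding carry_def by simp

lemma multiplicity_central_binomial:
  fixes p n :: nat
  assumes "prime p"
  shows "multiplicity p ((2*n) choose n) = (\<Sum>i=1..2*n. carry p n i)"
proof -
  have p: "p \<ge> 2" using prime_ge_2_nat[OF assms] .
  have "fact n * fact (2*n-n) * ((2*n) choose n) = (fact (2*n) :: nat)"
    by (rule binomial_fact_lemma) simp
  then have "multiplicity p (fact (2*n) :: nat) = multiplicity p (fact n * fact n * ((2*n) choose n))"
    by simp
  also have "\<dots> = 2 * multiplicity p (fact n :: nat) + multiplicity p ((2*n) choose n)"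
    using assms by (simp add: prime_elem_multiplicity_mult_distrib)
  finally have "multiplicity p (fact (2*n) :: nat) =
                2 * multiplicity p (fact n :: nat) + multiplicity p ((2*n) choose n)" .
  moreover have "multiplicity p (fact n :: nat) = (\<Sum>i=1..2*n. n div p^i)"
  proof -
    have "(\<Sum>i=n+1..2*n. n div p^i) = 0"
    proof (intro sum.neutral ballI)
      fix i assume "i \<in> {n+1..2*n}"
      then have "n < p ^ i" using less_power_self[OF p, of i] by simp
      then show "n div p ^ i = 0" by simp
    qed
    moreover have "{1..2*n} = {1..n} \<union> {n+1..2*n}" by auto
    ultimately show ?thesis
      using multiplicity_fact[OF assms, of n] by (simp add: sum.union_disjoint)
  qed
  moreover have "(\<Sum>i=1..2*n. (2*n) div p^i) =
                 2 * (\<Sum>i=1..2*n. n div p^i) + (\<Sum>i=1..2*n. carry p n i)"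
  proof -
    have "(\<Sum>i=1..2*n. (2*n) div p^i) = (\<Sum>i=1..2*n. 2 * (n div p^i) + carry p n i)"
      unfolding carry_def using div_double_bounds(1) p by (intro sum.cong refl) auto
    then show ?thesis by (simp add: sum.distrib sum_distrib_left)
  qed
  ultimately show ?thesis
    using multiplicity_fact[OF assms, of "2*n"] by simp
qed

lemma prime_power_multiplicity_central_binomial_le:
  fixes p n :: nat
  assumes "prime p" and "n \<ge> 1"
  shows "p ^ multiplicity p ((2*n) choose n) \<le> 2*n"
proof (rule ccontr)
  define M where "M = multiplicity p ((2*n) choose n)"
  assume "\<not> p ^ multiplicity p ((2*n) choose n) \<le> 2*n"
  then have big: "2*n < p ^ M" unfolding M_def by simp
  have "M = (\<Sum>i=1..2*n. carry p n i)"
    unfolding M_def by (rule multiplicity_central_binomial[OF assms(1)])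
  also have "\<dots> \<le> (\<Sum>i=1..2*n. if i < M then 1 else 0)"
  proof (intro sum_mono)
    fix i
    show "carry p n i \<le> (if i < M then 1 else 0)"
    proof (cases "i < M")
      case False
      then have "p ^ M \<le> p ^ i"
        using prime_ge_1_nat[OF assms(1)] by (intro power_increasing) auto
      then show ?thesis using big carry_eq_0 by simp
    qed (use carry_le_1 prime_gt_0_nat[OF assms(1)] in simp)
  qed
  also have "\<dots> = card {i \<in> {1..2*n}. i < M}"
    by (simp only: card_eq_sum sum.inter_filter finite_atLeastAtMost)
  also have "\<dots> \<le> card {1..<M}"
    by (intro card_mono) auto
  finally have "M = 0" by simp
  then show False using big assms(2) by simp
qed

lemma prime_not_dvd_central_binomial:
  fixes p n :: nat
  assumes "prime p" and "n \<ge> 5" and "p \<le> n" and "2*n < 3*p"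
  shows "\<not> p dvd (2*n) choose n"
proof -
  have "(2*n)*(2*n) < (3*p)*(3*p)"
    using mult_strict_mono[OF assms(4) assms(4)] prime_gt_0_nat[OF assms(1)] by simp
  moreover have "9 * (2*n) \<le> 2*n*(2*n)" using assms(2) by simp
  ultimately have pp: "2*n < p * p" by linarith
  have "multiplicity p ((2*n) choose n) = (\<Sum>i=1..2*n. carry p n i)"
    by (rule multiplicity_central_binomial[OF assms(1)])
  also have "\<dots> = 0"
  proof (intro sum.neutral ballI)
    fix i assume i: "i \<in> {1..2*n}"
    show "carry p n i = 0"
    proof (cases "i = 1")
      case True
      have "n div p = 1" "(2*n) div p = 2"
        using assms by (simp_all add: div_nat_eqI)
      then show ?thesis unfolding carry_def True by simp
    next
      case False
      then have "p^2 \<le> p^i"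
        using i prime_ge_1_nat[OF assms(1)] by (intro power_increasing) auto
      then show ?thesis using pp by (intro carry_eq_0) (simp add: power2_eq_square)
    qed
  qed
  finally have "multiplicity p ((2*n) choose n) = 0" .
  moreover have "(2*n) choose n \<noteq> 0" and "\<not> is_unit p"
    using assms(1) by auto
  ultimately show ?thesis using multiplicity_eq_zero_iff[of "(2*n) choose n" p] by simp
qed

lemma prime_factor_central_binomial_le:
  fixes n p :: nat
  assumes "n \<ge> 5" and no_prime: "\<nexists>p. prime p \<and> n < p \<and> p \<le> 2*n"
    and "p \<in> prime_factors ((2*n) choose n)"
  shows "3*p \<le> 2*n"
proof (rule ccontr)
  assume "\<not> 3*p \<le> 2*n"
  have p: "prime p" "p dvd (2*n) choose n"
    using assms(3) by (auto simp: in_prime_factors_iff)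
  have "fact n * fact (2*n-n) * ((2*n) choose n) = (fact (2*n) :: nat)"
    by (rule binomial_fact_lemma) simp
  then have "(2*n) choose n dvd fact (2*n)"
    by (metis dvd_triv_right)
  with p(2) have "p dvd fact (2*n)" by (rule dvd_trans)
  then have "p \<le> 2*n" using prime_dvd_fact_iff[OF p(1)] by simp
  with p(1) no_prime have "p \<le> n" using not_le by blast
  with \<open>\<not> 3*p \<le> 2*n\<close> have "\<not> p dvd (2*n) choose n"
    using prime_not_dvd_central_binomial[OF p(1) assms(1)] by simp
  with p(2) show False by contradiction
qed

lemma prod_small_prime_factors_central_binomial_le:
  fixes n :: nat
  assumes "n \<ge> 1"
  defines "C \<equiv> (2*n) choose n"
  shows "(\<Prod>p\<in>prime_factors C \<inter> {p. p*p \<le> 2*n}. p ^ multiplicity p C)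
           \<le> (2*n) ^ nat \<lfloor>sqrt (2*n)\<rfloor>"
proof -
  define S where "S = prime_factors C \<inter> {p. p*p \<le> 2*n}"
  have "S \<subseteq> {1..nat \<lfloor>sqrt (2*n)\<rfloor>}"
  proof
    fix p assume "p \<in> S"
    then have p: "prime p" "p*p \<le> 2*n"
      unfolding S_def by (auto simp: in_prime_factors_iff)
    have "real p = sqrt (real p * real p)" by simp
    also have "\<dots> \<le> sqrt (2*n)"
      using p(2) by (intro real_sqrt_le_mono) (simp only: of_nat_mult[symmetric] of_nat_le_iff)
    finally have "p \<le> nat \<lfloor>sqrt (2*n)\<rfloor>" by (rule le_nat_floor)
    then show "p \<in> {1..nat \<lfloor>sqrt (2*n)\<rfloor>}"
      using prime_ge_1_nat[OF p(1)] by simp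
  qed
  then have card: "card S \<le> nat \<lfloor>sqrt (2*n)\<rfloor>"
    using card_mono[of "{1..nat \<lfloor>sqrt (2*n)\<rfloor>}" S] by simp
  have "(\<Prod>p\<in>S. p ^ multiplicity p C) \<le> (\<Prod>p\<in>S. 2*n)"
  proof (rule prod_mono)
    fix p assume "p \<in> S"
    then have "prime p" unfolding S_def by (simp add: in_prime_factors_iff)
    then show "0 \<le> p ^ multiplicity p C \<and> p ^ multiplicity p C \<le> 2*n"
      using prime_power_multiplicity_central_binomial_le[OF _ assms(1)] unfolding C_def by simp
  qed
  also have "\<dots> = (2*n) ^ card S" by simp
  also have "\<dots> \<le> (2*n) ^ nat \<lfloor>sqrt (2*n)\<rfloor>"
    using card assms(1) by (intro power_increasing) auto
  finally show ?thesis unfolding S_def .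
qed

lemma prod_large_prime_factors_central_binomial_le:
  fixes n :: nat
  assumes "n \<ge> 5" and no_prime: "\<nexists>p. prime p \<and> n < p \<and> p \<le> 2*n"
  defines "C \<equiv> (2*n) choose n"
  shows "(\<Prod>p\<in>prime_factors C - {p. p*p \<le> 2*n}. p ^ multiplicity p C)
           \<le> primorial ((2*n) div 3)"
proof -
  define S where "S = prime_factors C - {p. p*p \<le> 2*n}"
  have "(\<Prod>p\<in>S. p ^ multiplicity p C) \<le> (\<Prod>p\<in>S. p)"
  proof (rule prod_mono)
    fix p assume "p \<in> S"
    then have p: "prime p" "2*n < p ^ 2"
      unfolding S_def by (auto simp: in_prime_factors_iff power2_eq_square)
    have "p ^ multiplicity p C \<le> 2*n"
      using prime_power_multiplicity_central_binomial_le[OF p(1)] assms(1) unfolding C_def by simp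
    with p(2) have "p ^ multiplicity p C < p ^ 2" by linarith
    then have "multiplicity p C < 2"
      using prime_gt_1_nat[OF p(1)] power_less_imp_less_exp by blast
    then have "p ^ multiplicity p C \<le> p ^ 1"
      using prime_ge_1_nat[OF p(1)] by (intro power_increasing) auto
    then show "0 \<le> p ^ multiplicity p C \<and> p ^ multiplicity p C \<le> p" by simp
  qed
  also have "\<dots> \<le> primorial ((2*n) div 3)"
  proof -
    have "S \<subseteq> {p. prime p \<and> p \<le> (2*n) div 3}"
    proof
      fix p assume "p \<in> S"
      then have "prime p" "3*p \<le> 2*n"
        using prime_factor_central_binomial_le[OF assms(1) no_prime, of p]
        unfolding S_def C_def by (auto simp: in_prime_factors_iff)
      then show "p \<in> {p. prime p \<and> p \<le> (2*n) div 3}" by auto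
    qed
    then have "\<Prod>S dvd primorial ((2*n) div 3)"
      unfolding primorial_def by (rule prod_dvd_prod_subset[OF finite_primes_le])
    moreover have "primorial ((2*n) div 3) > 0"
      unfolding primorial_def by (rule prod_pos) (auto dest: prime_gt_0_nat)
    ultimately show ?thesis by (simp add: dvd_imp_le)
  qed
  finally show ?thesis unfolding S_def .
qed

lemma central_binomial_le_if_no_prime_between:
  fixes n :: nat
  assumes "n \<ge> 5" and "\<nexists>p. prime p \<and> n < p \<and> p \<le> 2*n"
  shows "(2*n) choose n \<le> (2*n) ^ nat \<lfloor>sqrt (2*n)\<rfloor> * 4 ^ ((2*n) div 3)"
proof -
  define C where "C = (2*n) choose n"
  define P where "P = prime_factors C"
  have "C > 0" unfolding C_def by simp
  then have "C = (\<Prod>p\<in>P. p ^ multiplicity p C)"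
    unfolding P_def by (rule prime_factorization_nat)
  also have "\<dots> = (\<Prod>p\<in>P \<inter> {p. p*p \<le> 2*n}. p ^ multiplicity p C) *
                  (\<Prod>p\<in>P - {p. p*p \<le> 2*n}. p ^ multiplicity p C)"
    unfolding P_def by (rule prod.Int_Diff) simp
  also have "\<dots> \<le> (2*n) ^ nat \<lfloor>sqrt (2*n)\<rfloor> * primorial ((2*n) div 3)"
  proof (rule mult_le_mono)
    show "(\<Prod>p\<in>P \<inter> {p. p*p \<le> 2*n}. p ^ multiplicity p C) \<le> (2*n) ^ nat \<lfloor>sqrt (2*n)\<rfloor>"
      using prod_small_prime_factors_central_binomial_le[of n] assms(1)
      unfolding P_def C_def by simp
    show "(\<Prod>p\<in>P - {p. p*p \<le> 2*n}. p ^ multiplicity p C) \<le> primorial ((2*n) div 3)"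
      using prod_large_prime_factors_central_binomial_le[OF assms]
      unfolding P_def C_def by simp
  qed
  also have "\<dots> \<le> (2*n) ^ nat \<lfloor>sqrt (2*n)\<rfloor> * 4 ^ ((2*n) div 3)"
    using primorial_le_four_power by (intro mult_left_mono) auto
  finally show ?thesis unfolding C_def .
qed

lemma ln_le_half_self:
  fixes y :: real
  assumes "y > 0"
  shows "ln y \<le> y / 2"
proof -
  have "ln (y/2) \<le> y/2 - 1" using assms by (intro ln_le_minus_one) simp
  moreover have "ln (y/2) = ln y - ln 2" using assms by (simp add: ln_divide_pos)
  moreover have "ln (2::real) \<le> 1" using ln_le_minus_one[of 2] by simp
  ultimately show ?thesis by simp
qed

lemma sqrt_ln_estimate:
  fixes x :: real
  assumes "x \<ge> 10000"
  shows "(sqrt x + 1) * ln x < x * ln 4 / 6"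
proof -
  define y where "y = sqrt (sqrt x)"
  have "x > 0" using assms by simp
  then have "y > 0" and sqrt_x: "sqrt x = y^2"
    unfolding y_def by simp_all
  have "y^4 = (sqrt x)^2" unfolding sqrt_x by simp
  then have x: "x = y^4" using \<open>x > 0\<close> by simp
  have "100 \<le> sqrt x"
    using real_sqrt_le_mono[OF assms] by simp
  then have "10 \<le> y"
    unfolding y_def using real_sqrt_le_mono[of 100 "sqrt x"] by simp
  have ln4: "ln (4::real) \<ge> 4/3"
    using ln2_ge_two_thirds ln_mult[of 2 "2::real"] by simp
  have "ln x = 4 * ln y" using \<open>y > 0\<close> by (subst x) (simp add: ln_realpow)
  then have "(sqrt x + 1) * ln x = (y^2 + 1) * (4 * ln y)" by (simp add: sqrt_x)
  also have "\<dots> \<le> (y^2 + 1) * (4 * (y/2))"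
    using ln_le_half_self[OF \<open>y > 0\<close>] by (intro mult_left_mono) auto
  also have "\<dots> = 2*y^3 + 2*y" by (simp add: algebra_simps power2_eq_square power3_eq_cube)
  also have "\<dots> < (2/9) * y^4"
  proof -
    have "10 * 10 \<le> y * y" using \<open>10 \<le> y\<close> by (intro mult_mono) auto
    then have cube: "100 * y \<le> y^3"
      using mult_right_mono[of 100 "y * y" y] \<open>y > 0\<close> by (simp add: power3_eq_cube)
    have "y^3 * 10 \<le> y^3 * y" using \<open>10 \<le> y\<close> \<open>y > 0\<close> by (intro mult_left_mono) auto
    then have "10 * y^3 \<le> y^4" by (simp add: power_Suc[symmetric] mult.commute del: power_Suc)
    with cube \<open>y > 0\<close> show ?thesis by linarith
  qed
  also have "\<dots> \<le> x * ln 4 / 6"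
    using ln4 \<open>x > 0\<close> by (simp add: x)
  finally show ?thesis .
qed

lemma four_power_estimate:
  fixes n r :: nat
  assumes n: "n \<ge> 5000" and r: "real r \<le> sqrt (2 * real n)"
  shows "(2 * real n) ^ (r+1) * 4 ^ ((2*n) div 3) < 4 ^ n"
proof -
  have pos: "2 * real n > 0" using n by simp
  have "real (r+1) * ln (2 * real n) \<le> (sqrt (2 * real n) + 1) * ln (2 * real n)"
    using r n by (intro mult_right_mono) auto
  also have "\<dots> < 2 * real n * ln 4 / 6"
    using n by (intro sqrt_ln_estimate) simp
  finally have small: "real (r+1) * ln (2 * real n) < (1/3) * (real n * ln 4)" by simp
  have "3 * ((2*n) div 3) \<le> 2*n" by simp
  then have "real (3 * ((2*n) div 3)) \<le> real (2*n)" by (simp only: of_nat_le_iff)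
  then have "real ((2*n) div 3) \<le> 2 * real n / 3" by simp
  then have "real ((2*n) div 3) * ln 4 \<le> (2 * real n / 3) * ln 4"
    by (intro mult_right_mono) auto
  then have large: "real ((2*n) div 3) * ln 4 \<le> (2/3) * (real n * ln 4)" by simp
  have "ln ((2 * real n) ^ (r+1) * 4 ^ ((2*n) div 3)) =
        real (r+1) * ln (2 * real n) + real ((2*n) div 3) * ln 4"
    using pos by (simp add: ln_mult ln_realpow algebra_simps)
  also have "\<dots> < real n * ln 4" using small large by linarith
  also have "\<dots> = ln (4 ^ n)" by (simp add: ln_realpow)
  finally have "ln ((2 * real n) ^ (r+1) * 4 ^ ((2*n) div 3)) < ln (4 ^ n)" .
  moreover have "(2 * real n) ^ (r+1) * 4 ^ ((2*n) div 3) > 0" using pos by simp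
  ultimately show ?thesis by (subst (asm) ln_less_cancel_iff) auto
qed

lemma bertrand_ge_5000:
  fixes n :: nat
  assumes "n \<ge> 5000"
  shows "\<exists>p. prime p \<and> n < p \<and> p \<le> 2*n"
proof (rule ccontr)
  define r where "r = nat \<lfloor>sqrt (2*n)\<rfloor>"
  assume "\<nexists>p. prime p \<and> n < p \<and> p \<le> 2*n"
  with assms have "(2*n) choose n \<le> (2*n) ^ r * 4 ^ ((2*n) div 3)"
    unfolding r_def by (intro central_binomial_le_if_no_prime_between) auto
  then have "real ((2*n) choose n) \<le> real ((2*n) ^ r * 4 ^ ((2*n) div 3))"
    by (simp only: of_nat_le_iff)
  then have "real ((2*n) choose n) \<le> (2 * real n) ^ r * 4 ^ ((2*n) div 3)" by simp
  moreover have "4 ^ n / (2 * real n) \<le> real ((2*n) choose n)"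
    using central_binomial_lower_bound[of n] assms by simp
  ultimately have "4 ^ n / (2 * real n) \<le> (2 * real n) ^ r * 4 ^ ((2*n) div 3)"
    by linarith
  then have "4 ^ n \<le> (2 * real n) ^ (r+1) * 4 ^ ((2*n) div 3)"
    using assms by (simp add: divide_le_eq mult_ac)
  moreover have "real r \<le> sqrt (2 * real n)"
    unfolding r_def by (simp add: of_nat_floor)
  ultimately show False
    using four_power_estimate[OF assms, of r] by linarith
qed

lemma bertrand_below_prime_chain:
  fixes ps :: "nat list" and n :: nat
  assumes "successively (\<lambda>a b. a < b \<and> b \<le> 2*a) (2 # ps)" and "\<forall>p \<in> set ps. prime p"
    and "1 \<le> n" and "n < last (2 # ps)"
  shows "\<exists>p. prime p \<and> n < p \<and> p \<le> 2*n"
  using assms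
proof (induction ps rule: rev_induct)
  case (snoc b ps)
  have "successively (\<lambda>a b. a < b \<and> b \<le> 2*a) ((2 # ps) @ [b])"
    using snoc.prems(1) by simp
  then have chain: "successively (\<lambda>a b. a < b \<and> b \<le> 2*a) (2 # ps)"
    and step: "b \<le> 2 * last (2 # ps)"
    by (simp_all only: successively_append_iff) auto
  show ?case
  proof (cases "n < last (2 # ps)")
    case True
    with snoc chain show ?thesis by simp
  next
    case False
    with snoc.prems step show ?thesis by (intro exI[of _ b]) auto
  qed
qed (intro exI[of _ 2], auto)

theorem bertrand:
  fixes n :: nat
  assumes "n \<ge> 1"
  shows "\<exists>p. prime p \<and> n < p \<and> p \<le> 2*n"
proof (cases "n < 5003")
  case True
  have "prime (3::nat)"
    by (rule prime_nat_by_trial_division[where m=2]) (simp_all add: upt_rec)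
  moreover have "prime (5::nat)"
    by (rule prime_nat_by_trial_division[where m=3]) (simp_all add: upt_rec)
  moreover have "prime (7::nat)"
    by (rule prime_nat_by_trial_division[where m=3]) (simp_all add: upt_rec)
  moreover have "prime (13::nat)"
    by (rule prime_nat_by_trial_division[where m=4]) (simp_all add: upt_rec)
  moreover have "prime (23::nat)"
    by (rule prime_nat_by_trial_division[where m=5]) (simp_all add: upt_rec)
  moreover have "prime (43::nat)"
    by (rule prime_nat_by_trial_division[where m=7]) (simp_all add: upt_rec)
  moreover have "prime (83::nat)"
    by (rule prime_nat_by_trial_division[where m=10]) (simp_all add: upt_rec)
  moreover have "prime (163::nat)"
    by (rule prime_nat_by_trial_division[where m=13]) (simp_all add: upt_rec)
  moreover have "prime (317::nat)"
    by (rule prime_nat_by_trial_division[where m=18]) (simp_all add: upt_rec)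
  moreover have "prime (631::nat)"
    by (rule prime_nat_by_trial_division[where m=26]) (simp_all add: upt_rec)
  moreover have "prime (1259::nat)"
    by (rule prime_nat_by_trial_division[where m=36]) (simp_all add: upt_rec)
  moreover have "prime (2503::nat)"
    by (rule prime_nat_by_trial_division[where m=51]) (simp_all add: upt_rec)
  moreover have "prime (5003::nat)"
    by (rule prime_nat_by_trial_division[where m=71]) (simp_all add: upt_rec)
  ultimately show ?thesis
    using True assms
    by (intro bertrand_below_prime_chain
        [where ps = "[3, 5, 7, 13, 23, 43, 83, 163, 317, 631, 1259, 2503, 5003]"])
      (simp_all del: prime_nat_numeral_eq)
qed (use bertrand_ge_5000 in auto)

section \<open>Codes from the polynomials \<open>\<Prod>(1 + a X)\<close>\<close>

lemma card_J: "card (J q n) = (n + q - 1) choose n"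
proof -
  define L where "L = {l::nat list. size l = q \<and> sum_list l = n}"
  have sum_map: "sum_list (map a [0..<q]) = (\<Sum>i<q. a i)" for a :: "nat \<Rightarrow> nat"
    by (simp add: sum_set_upt_conv_sum_list_nat[symmetric] atLeast0LessThan)
  have "bij_betw (\<lambda>a. map a [0..<q]) (J q n) L"
  proof (rule bij_betwI[where g = "\<lambda>l i. if i < q then l ! i else undefined"])
    show "(\<lambda>a. map a [0..<q]) \<in> J q n \<rightarrow> L"
      unfolding J_def L_def using sum_map by auto
    show "(\<lambda>l i. if i < q then l ! i else undefined) \<in> L \<rightarrow> J q n"
    proof
      fix l assume l: "l \<in> L"
      have "(\<Sum>i<q. if i < q then l ! i else undefined) = sum_list l"
        using l unfolding L_def by (simp add: sum_list_sum_nth atLeast0LessThan)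
      then show "(\<lambda>i. if i < q then l ! i else undefined) \<in> J q n"
        using l unfolding J_def L_def by (auto split: if_splits)
    qed
    show "(\<lambda>i. if i < q then map a [0..<q] ! i else undefined) = a" if "a \<in> J q n" for a
      using that unfolding J_def by (auto simp: PiE_def extensional_def)
    show "map (\<lambda>i. if i < q then l ! i else undefined) [0..<q] = l" if "l \<in> L" for l
      using that unfolding L_def by (auto intro: nth_equalityI)
  qed
  then have "card (J q n) = card L" by (rule bij_betw_same_card)
  also have "\<dots> = (n + q - 1) choose n" unfolding L_def by (rule card_length_sum_list)
  finally show ?thesis .
qed

lemma exists_large_fiber:
  fixes f :: "'a \<Rightarrow> 'b"
  assumes "finite Y" and "f ` X \<subseteq> Y"
  shows "\<exists>y. card X \<le> card Y * card {x \<in> X. f x = y}"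
proof (cases "Y = {}")
  case False
  define M where "M = Max ((\<lambda>y. card {x \<in> X. f x = y}) ` Y)"
  obtain y0 where "card {x \<in> X. f x = y0} = M"
    unfolding M_def using assms(1) False
    by (metis (no_types, lifting) Max_in finite_imageI image_iff image_is_empty)
  have "card X \<le> (\<Sum>y\<in>Y. card {x \<in> X. f x = y})"
  proof -
    have "X = (\<Union>y\<in>Y. {x \<in> X. f x = y})" using assms(2) by auto
    then show ?thesis by (metis card_UN_le assms(1))
  qed
  also have "\<dots> \<le> of_nat (card Y) * M"
  proof (rule sum_bounded_above)
    show "card {x \<in> X. f x = y} \<le> M" if "y \<in> Y" for y
      using that assms(1) unfolding M_def by (intro Max_ge) auto
  qed
  finally show ?thesis using \<open>_ = M\<close> by auto
qed (use assms(2) in simp)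

lemma coeff_dvd_of_coeff_mult_dvd:
  fixes C D :: "'a::comm_ring_1 poly"
  assumes "coeff C 0 = 1" and "\<And>j. j \<le> h \<Longrightarrow> p dvd coeff (C * D) j" and "j \<le> h"
  shows "p dvd coeff D j"
  using assms(3)
proof (induction j rule: less_induct)
  case (less j)
  have "coeff (C * D) j = (\<Sum>i\<le>j. coeff C i * coeff D (j - i))" by (rule coeff_mult)
  also have "\<dots> = coeff D j + (\<Sum>i\<in>{1..j}. coeff C i * coeff D (j - i))"
    using assms(1) by (simp add: atMost_atLeast0 sum.atLeast_Suc_atMost)
  finally have "coeff D j = coeff (C * D) j - (\<Sum>i\<in>{1..j}. coeff C i * coeff D (j - i))"
    by (simp add: algebra_simps)
  moreover have "p dvd (\<Sum>i\<in>{1..j}. coeff C i * coeff D (j - i))"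
    using less by (intro dvd_sum dvd_mult) auto
  ultimately show ?case using assms(2) less.prems by simp
qed

lemma dvd_poly_of_dvd_coeffs:
  fixes D :: "'a::comm_ring_1 poly"
  assumes "\<And>j. p dvd coeff D j"
  shows "p dvd poly D t"
  using assms
proof (induction D rule: pCons_induct)
  case (pCons a D)
  then have "p dvd a" and "\<And>j. p dvd coeff D j"
    using coeff_pCons_0 coeff_pCons_Suc by metis+
  with pCons.IH show ?case by simp
qed simp

definition code_poly :: "nat \<Rightarrow> (nat \<Rightarrow> nat) \<Rightarrow> int poly" where
  "code_poly q u = (\<Prod>i<q. [:1, int (i+1):] ^ u i)"

definition syndrome :: "nat \<Rightarrow> nat \<Rightarrow> nat \<Rightarrow> (nat \<Rightarrow> nat) \<Rightarrow> nat \<Rightarrow> int" where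
  "syndrome q p h u = restrict (\<lambda>j. coeff (code_poly q u) j mod int p) {1..h}"

lemma code_poly_add: "code_poly q (\<lambda>i. u i + v i) = code_poly q u * code_poly q v"
  by (simp add: code_poly_def power_add prod.distrib)

lemma coeff_0_code_poly: "coeff (code_poly q u) 0 = 1"
  by (induction q) (simp_all add: code_poly_def coeff_mult_0 coeff_0_power)

lemma degree_code_poly_le: "degree (code_poly q u) \<le> (\<Sum>i<q. u i)"
proof -
  have "degree (code_poly q u) \<le> (\<Sum>i<q. degree ([:1, int (i+1):] ^ u i))"
    unfolding code_poly_def
    using degree_prod_sum_le[of "{..<q}" "\<lambda>i. [:1, int (i+1):] ^ u i"] by (simp add: o_def)
  also have "\<dots> \<le> (\<Sum>i<q. u i)"
    by (intro sum_mono order.trans[OF degree_power_le]) simp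
  finally show ?thesis .
qed

lemma poly_code_poly: "poly (code_poly q u) t = (\<Prod>i<q. (1 + int (i+1) * t) ^ u i)"
  by (simp add: code_poly_def poly_prod poly_power algebra_simps)

lemma sum_diff_eq_sum_diff_swap:
  fixes u v :: "nat \<Rightarrow> nat"
  assumes "(\<Sum>i\<in>I. u i) = (\<Sum>i\<in>I. v i)"
  shows "(\<Sum>i\<in>I. v i - u i) = (\<Sum>i\<in>I. u i - v i)"
proof -
  have "(\<Sum>i\<in>I. u i) = (\<Sum>i\<in>I. min (u i) (v i) + (u i - v i))"
    and "(\<Sum>i\<in>I. v i) = (\<Sum>i\<in>I. min (u i) (v i) + (v i - u i))"
    by (rule sum.cong; simp)+
  with assms show ?thesis by (simp only: sum.distrib)
qed

lemma dL_eq_twice_excess: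
  assumes "(\<Sum>i<q. u i) = (\<Sum>i<q. v i)"
  shows "dL q u v = 2 * int (\<Sum>i<q. u i - v i)"
proof -
  have "dL q u v = (\<Sum>i<q. int (u i - v i) + int (v i - u i))"
    unfolding dL_def by (intro sum.cong refl) auto
  also have "\<dots> = int (\<Sum>i<q. u i - v i) + int (\<Sum>i<q. v i - u i)"
    by (simp add: sum.distrib)
  also have "\<dots> = 2 * int (\<Sum>i<q. u i - v i)"
    using sum_diff_eq_sum_diff_swap[OF assms] by simp
  finally show ?thesis .
qed

lemma J_exists_greater_coordinate:
  assumes "u \<in> J q n" and "v \<in> J q n" and "u \<noteq> v"
  obtains j where "j < q" and "v j < u j"
proof -
  have sums: "(\<Sum>i<q. v i) = (\<Sum>i<q. u i)"
    using assms(1,2) by (simp add: J_def)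
  have "\<exists>j<q. v j < u j"
  proof (rule ccontr)
    assume "\<not> (\<exists>j<q. v j < u j)"
    then have "u i = v i" if "i \<in> {..<q}" for i
      using sum_mono_inv[OF sums[symmetric] _ that] by fastforce
    then have "u = v"
      using assms(1,2) unfolding J_def by (intro PiE_ext[of u "{..<q}" "\<lambda>_. UNIV"]) auto
    with assms(3) show False by contradiction
  qed
  with that show ?thesis by blast
qed

text \<open>Take \<open>t \<equiv> -1/(j+1)\<close> modulo \<open>p\<close>; then \<open>1 + (i+1) t \<equiv> (i - j) t\<close>, which vanishes only for \<open>i = j\<close>
  because \<open>0 < \<bar>i - j\<bar> < q < p\<close>.\<close>

lemma exists_root_of_single_linear_factor:
  fixes p q j :: nat
  assumes "prime p" and "q < p" and "j < q"
  obtains t :: int where "int p dvd 1 + int (j+1) * t"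
    and "\<And>i. i < q \<Longrightarrow> i \<noteq> j \<Longrightarrow> \<not> int p dvd 1 + int (i+1) * t"
proof -
  have "\<not> p dvd j + 1" using assms by (auto dest: dvd_imp_le)
  then have "coprime p (j + 1)" using assms(1) prime_imp_coprime by blast
  then have "coprime (j + 1) p" by (simp add: coprime_commute)
  then have "coprime (int (j+1)) (int p)" by (simp only: coprime_int_iff)
  then obtain x y where "x * int (j+1) + y * int p = 1"
    using bezout_int[of "int (j+1)" "int p"] by (auto simp: coprime_iff_gcd_eq_1)
  then have "1 + int (j+1) * (-x) = y * int p" by (simp add: algebra_simps)
  then have root: "int p dvd 1 + int (j+1) * (-x)" by simp
  have "\<not> int p dvd -x"
  proof
    assume "int p dvd -x"
    then have "int p dvd int (j+1) * (-x)" by simp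
    with root have "int p dvd 1" by (metis dvd_add_right_iff add.commute)
    with assms(1) show False by (simp add: prime_int_iff)
  qed
  have "\<not> int p dvd 1 + int (i+1) * (-x)" if "i < q" "i \<noteq> j" for i
  proof
    assume "int p dvd 1 + int (i+1) * (-x)"
    then have "int p dvd (1 + int (i+1) * (-x)) - (1 + int (j+1) * (-x))"
      using root by (rule dvd_diff)
    then have "int p dvd (int i - int j) * (-x)" by (simp add: algebra_simps)
    with \<open>\<not> int p dvd -x\<close> have "int p dvd int i - int j"
      using assms(1) by (simp add: prime_dvd_mult_iff)
    then have "int p \<le> \<bar>int i - int j\<bar>"
      using that(2) by (intro zdvd_imp_le) auto
    with that assms(2,3) show False by linarith
  qed
  with root that show ?thesis by blast
qed

lemma code_poly_congruent_if_syndrome_eq: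
  fixes w x y :: "nat \<Rightarrow> nat"
  assumes "syndrome q p h (\<lambda>i. w i + x i) = syndrome q p h (\<lambda>i. w i + y i)"
    and "(\<Sum>i<q. x i) \<le> h" and "(\<Sum>i<q. y i) \<le> h"
  shows "int p dvd poly (code_poly q x) t - poly (code_poly q y) t"
proof -
  define C A B where "C = code_poly q w" and "A = code_poly q x" and "B = code_poly q y"
  have mult: "int p dvd coeff (C * (A - B)) j" if "j \<le> h" for j
  proof (cases "j = 0")
    case True
    then show ?thesis by (simp add: C_def A_def B_def coeff_mult_0 coeff_0_code_poly)
  next
    case False
    with that have "coeff (C * A) j mod int p = coeff (C * B) j mod int p"
      using fun_cong[OF assms(1), of j]
      unfolding syndrome_def code_poly_add C_def A_def B_def by simp
    then show ?thesis by (simp add: mod_eq_dvd_iff right_diff_distrib)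
  qed
  have "coeff C 0 = 1" by (simp add: C_def coeff_0_code_poly)
  then have low: "int p dvd coeff (A - B) j" if "j \<le> h" for j
    using mult that by (rule coeff_dvd_of_coeff_mult_dvd)
  have "degree (A - B) \<le> h"
    using degree_diff_le_max[of A B] degree_code_poly_le[of q x] degree_code_poly_le[of q y]
      assms(2,3) unfolding A_def B_def by linarith
  then have "int p dvd coeff (A - B) j" for j
    using low coeff_eq_0[of "A - B" j] by (cases "j \<le> h") auto
  then have "int p dvd poly (A - B) t" by (rule dvd_poly_of_dvd_coeffs)
  then show ?thesis unfolding A_def B_def by simp
qed

lemma exists_point_separating_code_polys:
  fixes p q j :: nat and x y :: "nat \<Rightarrow> nat"
  assumes "prime p" and "q < p" and "j < q" and "x j > 0" and "y j = 0"
  obtains t where "int p dvd poly (code_poly q x) t" and "\<not> int p dvd poly (code_poly q y) t"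
proof -
  have "prime (int p)" using assms(1) by simp
  obtain t where root: "int p dvd 1 + int (j+1) * t"
    and nonroot: "\<And>i. i < q \<Longrightarrow> i \<noteq> j \<Longrightarrow> \<not> int p dvd 1 + int (i+1) * t"
    using exists_root_of_single_linear_factor[OF assms(1-3)] by blast
  have "int p dvd (1 + int (j+1) * t) ^ x j"
    using dvd_trans[OF root dvd_power[of "x j"]] assms(4) by blast
  also have "\<dots> dvd poly (code_poly q x) t"
    unfolding poly_code_poly using assms(3) by (intro dvd_prodI) auto
  finally have "int p dvd poly (code_poly q x) t" .
  moreover have "\<not> int p dvd poly (code_poly q y) t"
  proof
    assume "int p dvd poly (code_poly q y) t"
    then have "int p dvd (\<Prod>i<q. (1 + int (i+1) * t) ^ y i)" by (simp only: poly_code_poly)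
    then have "\<exists>i\<in>{..<q}. int p dvd (1 + int (i+1) * t) ^ y i"
      by (simp only: prime_dvd_prod_iff[OF finite_lessThan \<open>prime (int p)\<close>])
    then obtain i where "i < q" and i: "int p dvd (1 + int (i+1) * t) ^ y i" by blast
    have "y i \<noteq> 0"
    proof
      assume "y i = 0"
      with i have "int p dvd 1" by simp
      with assms(1) show False by simp
    qed
    then have "int p dvd 1 + int (i+1) * t"
      using i \<open>prime (int p)\<close> prime_dvd_power by blast
    moreover have "i \<noteq> j" using \<open>y i \<noteq> 0\<close> assms(5) by auto
    then have "\<not> int p dvd 1 + int (i+1) * t" by (rule nonroot[OF \<open>i < q\<close>])
    ultimately show False by contradiction
  qed
  ultimately show ?thesis using that by blast
qed

lemma dL_ge_if_syndrome_eq: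
  fixes p q n h :: nat and u v :: "nat \<Rightarrow> nat"
  assumes "prime p" and "q < p" and "u \<in> J q n" and "v \<in> J q n" and "u \<noteq> v"
    and "syndrome q p h u = syndrome q p h v"
  shows "dL q u v \<ge> 2 * int (h+1)"
proof (rule ccontr)
  assume short: "\<not> dL q u v \<ge> 2 * int (h+1)"
  define x y w where "x i = u i - v i" and "y i = v i - u i" and "w i = min (u i) (v i)" for i
  have sums: "(\<Sum>i<q. u i) = (\<Sum>i<q. v i)"
    using assms(3,4) by (simp add: J_def)
  have small_x: "(\<Sum>i<q. x i) \<le> h"
    using short unfolding dL_eq_twice_excess[OF sums] x_def by (simp del: of_nat_sum)
  have small_y: "(\<Sum>i<q. y i) \<le> h"
    using sum_diff_eq_sum_diff_swap[OF sums] small_x unfolding x_def y_def by simp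
  have "u = (\<lambda>i. w i + x i)" and "v = (\<lambda>i. w i + y i)"
    unfolding w_def x_def y_def by auto
  with assms(6) have "syndrome q p h (\<lambda>i. w i + x i) = syndrome q p h (\<lambda>i. w i + y i)"
    by simp
  then have congruent: "int p dvd poly (code_poly q x) t - poly (code_poly q y) t" for t
    using small_x small_y by (rule code_poly_congruent_if_syndrome_eq)
  obtain j where "j < q" and "v j < u j"
    using J_exists_greater_coordinate[OF assms(3-5)] .
  then have "x j > 0" and "y j = 0" unfolding x_def y_def by auto
  then obtain t where "int p dvd poly (code_poly q x) t" and "\<not> int p dvd poly (code_poly q y) t"
    using exists_point_separating_code_polys[OF assms(1,2) \<open>j < q\<close>] by blast
  moreover have "int p dvd poly (code_poly q x) t - (poly (code_poly q x) t - poly (code_poly q y) t)"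
    using \<open>int p dvd poly (code_poly q x) t\<close> congruent by (rule dvd_diff)
  ultimately show False by simp
qed

lemma exists_large_code:
  fixes p q n h :: nat
  assumes "prime p" and "q < p"
  shows "\<exists>A \<subseteq> J q n. card (J q n) \<le> p ^ h * card A
           \<and> (\<forall>u\<in>A. \<forall>v\<in>A. u \<noteq> v \<longrightarrow> dL q u v \<ge> 2 * int (h+1))"
proof -
  define Y where "Y = {1..h} \<rightarrow>\<^sub>E {0..<int p}"
  have "syndrome q p h ` J q n \<subseteq> Y"
    using prime_gt_0_nat[OF assms(1)] by (auto simp: Y_def syndrome_def)
  moreover have "finite Y" and "card Y = p ^ h"
    unfolding Y_def by (simp_all add: finite_PiE card_PiE)
  ultimately obtain c where c: "card (J q n) \<le> p ^ h * card {u \<in> J q n. syndrome q p h u = c}"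
    using exists_large_fiber[of Y "syndrome q p h" "J q n"] by auto
  show ?thesis
  proof (intro exI conjI)
    show "{u \<in> J q n. syndrome q p h u = c} \<subseteq> J q n" by blast
    show "\<forall>u\<in>{u \<in> J q n. syndrome q p h u = c}. \<forall>v\<in>{u \<in> J q n. syndrome q p h u = c}.
            u \<noteq> v \<longrightarrow> dL q u v \<ge> 2 * int (h+1)"
      using dL_ge_if_syndrome_eq[OF assms] by auto
  qed (rule c)
qed

lemma prime_power_le_bound:
  fixes p q \<delta> :: nat
  assumes "p \<le> 2*q" and "\<delta> \<ge> 2"
  shows "real (p ^ (\<delta> - 1)) \<le> real (2*q + 2) ^ (\<delta> - 2) * real (2*q + 1)"
proof -
  have "real (p ^ (\<delta> - 1)) \<le> real (2*q) ^ (\<delta> - 1)"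
    unfolding of_nat_power using assms(1) by (intro power_mono) auto
  also have "\<dots> = real (2*q) ^ (\<delta> - 2) * real (2*q)"
  proof -
    have "\<delta> - 1 = Suc (\<delta> - 2)" using assms(2) by simp
    then show ?thesis by (simp only: power_Suc2)
  qed
  also have "\<dots> \<le> real (2*q + 2) ^ (\<delta> - 2) * real (2*q + 1)"
    by (intro mult_mono power_mono) auto
  finally show ?thesis .
qed

theorem corollary4p4:
  fixes q n \<delta> :: nat
  assumes "q \<ge> 2" and "\<delta> \<ge> 2" and "n \<ge> \<delta>"
  shows "\<exists>A \<subseteq> J q n.
           real (card A) \<ge> real ((n + q - 1) choose n) /
              (real (2 * q + 2) ^ (\<delta> - 2) * real (2 * q + 1))
         \<and> (\<forall>u\<in>A. \<forall>v\<in>A. u \<noteq> v \<longrightarrow> dL q u v \<ge> 2 * int \<delta>)"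
proof -
  obtain p where "prime p" "q < p" "p \<le> 2*q"
    using bertrand[of q] assms(1) by auto
  then obtain A where "A \<subseteq> J q n" and size: "card (J q n) \<le> p ^ (\<delta> - 1) * card A"
    and dist: "\<forall>u\<in>A. \<forall>v\<in>A. u \<noteq> v \<longrightarrow> dL q u v \<ge> 2 * int (\<delta> - 1 + 1)"
    using exists_large_code[OF \<open>prime p\<close> \<open>q < p\<close>, of n "\<delta> - 1"] by blast
  have "real ((n + q - 1) choose n) \<le> real (p ^ (\<delta> - 1)) * real (card A)"
    using size by (simp only: card_J of_nat_mult[symmetric] of_nat_le_iff)
  also have "\<dots> \<le> real (2 * q + 2) ^ (\<delta> - 2) * real (2 * q + 1) * real (card A)"
    using prime_power_le_bound[OF \<open>p \<le> 2*q\<close> assms(2)] by (intro mult_right_mono) auto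
  finally have "real (card A) \<ge> real ((n + q - 1) choose n) /
                  (real (2 * q + 2) ^ (\<delta> - 2) * real (2 * q + 1))"
    by (simp add: divide_le_eq mult.commute)
  moreover have "\<forall>u\<in>A. \<forall>v\<in>A. u \<noteq> v \<longrightarrow> dL q u v \<ge> 2 * int \<delta>"
    using dist assms(2) by simp
  ultimately show ?thesis using \<open>A \<subseteq> J q n\<close> by blast
qed

end
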